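(* Let $C=L_1;\ldots;L_d$ be a sorting network on $n$ channels of depth $d\ge2$ whose last layer is in last layer normal form. Let $i<j$ be two channels that are both unused in layer $L_{d-1}$ and that belong to different blocks of $C$. Then the network obtained from $C$ by adding the comparator $(i,j)$ to layer $L_{d-1}$ is still a sorting network.
   Context: Channels are numbered $1,\ldots,n$. A comparator network of depth $d$ is a sequence $C=L_1;\ldots;L_d$ of layers; each layer is a set of comparators $(i,j)$ with $1\le i<j\le n$, each channel occurring in at most one comparator of a layer. An input $\bar x\in\{0,1\}^n$ propagates: $\bar x_0=\bar x$, and $\bar x_k$ is obtained from $\bar x_{k-1}$ by, for each $(i,j)\in L_k$, putting the minimum of the values at positions $i,j$ at position $i$ and the maximum at position $j$. The output is $C(\bar x)=\bar x_d$; $C$ is a sorting network if $C(\bar x)$ is sorted non-decreasingly for all $\bar x\in\{0,1\}^n$. A channel is used in a layer if it occurs in some comparator of that layer. The last layer $L_d$ is in last layer normal form if every comparator of $L_d$ is of the form $(i,i+1)$ and there is no $i<n$ with both $i$ and $i+1$ unused in $L_d$. The blocks of $C$ are the vertex sets of the connected components of the graph on $\{1,\ldots,n\}$ with an edge $\{i,j\}$ for each comparator $(i,j)\in L_d$. *)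

theory Defs
  imports Main
begin

(* Channels are natural numbers 1..n. A comparator is a pair (i,j) with i<j.
   A layer is a set of comparators; a network is a list of layers [L_1,...,L_d]. *)

type_synonym comparator = "nat \<times> nat"
type_synonym layer = "comparator set"
type_synonym network = "layer list"

definition is_layer :: "nat \<Rightarrow> layer \<Rightarrow> bool" where
  "is_layer n L \<longleftrightarrow>
     (\<forall>(i,j)\<in>L. 1 \<le> i \<and> i < j \<and> j \<le> n) \<and>
     (\<forall>c\<in>L. \<forall>c'\<in>L. c \<noteq> c' \<longrightarrow>
        {fst c, snd c} \<inter> {fst c', snd c'} = {})"

definition is_network :: "nat \<Rightarrow> network \<Rightarrow> bool" where
  "is_network n C \<longleftrightarrow> (\<forall>L\<in>set C. is_layer n L)"

(* Binary inputs: functions from channels to bool (False = 0, True = 1);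
   only the values on channels 1..n matter. *)
definition apply_layer :: "layer \<Rightarrow> (nat \<Rightarrow> bool) \<Rightarrow> (nat \<Rightarrow> bool)" where
  "apply_layer L x = (\<lambda>k.
     if \<exists>j. (k,j) \<in> L then min (x k) (x (THE j. (k,j) \<in> L))
     else if \<exists>i. (i,k) \<in> L then max (x (THE i. (i,k) \<in> L)) (x k)
     else x k)"

definition run :: "network \<Rightarrow> (nat \<Rightarrow> bool) \<Rightarrow> (nat \<Rightarrow> bool)" where
  "run C x = fold apply_layer C x"

definition sorted_on :: "nat \<Rightarrow> (nat \<Rightarrow> bool) \<Rightarrow> bool" where
  "sorted_on n y \<longleftrightarrow> (\<forall>i j. 1 \<le> i \<longrightarrow> i \<le> j \<longrightarrow> j \<le> n \<longrightarrow> y i \<le> y j)"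

definition sorting_network :: "nat \<Rightarrow> network \<Rightarrow> bool" where
  "sorting_network n C \<longleftrightarrow> is_network n C \<and> (\<forall>x. sorted_on n (run C x))"

definition used :: "layer \<Rightarrow> nat \<Rightarrow> bool" where
  "used L k \<longleftrightarrow> (\<exists>c\<in>L. k = fst c \<or> k = snd c)"

definition last_layer_nf :: "nat \<Rightarrow> layer \<Rightarrow> bool" where
  "last_layer_nf n L \<longleftrightarrow>
     (\<forall>(i,j)\<in>L. j = i + 1) \<and>
     \<not> (\<exists>i. 1 \<le> i \<and> i < n \<and> \<not> used L i \<and> \<not> used L (i+1))"

definition same_block :: "network \<Rightarrow> nat \<Rightarrow> nat \<Rightarrow> bool" where
  "same_block C i j \<longleftrightarrow> (i, j) \<in> (last C \<union> (last C)\<inverse>)\<^sup>*"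

end

theory Submission
  imports Defs
begin

text \<open>
  The comparator (i,j) added to layer d-1 never exchanges anything: if it did, the input of
  the last layer would carry a 1 on channel i and a 0 on channel j. A last layer of adjacent
  comparators moves that 1 to channel i or i+1 and that 0 to channel j-1 or j, and both
  moves happen only through comparators. Sortedness of the output then forces j = i+1 with
  (i,i+1) a comparator of the last layer, i.e. i and j in the same block.
\<close>

lemma apply_layer_unused: "\<not> used L k \<Longrightarrow> apply_layer L x k = x k"
  unfolding apply_layer_def used_def by force

lemma is_layer_disjoint:
  "is_layer n L \<Longrightarrow> c \<in> L \<Longrightarrow> c' \<in> L \<Longrightarrow> c \<noteq> c' \<Longrightarrow> {fst c, snd c} \<inter> {fst c', snd c'} = {}"
  unfolding is_layer_def by blast

lemma is_layer_fst_unique: "is_layer n L \<Longrightarrow> (a, b) \<in> L \<Longrightarrow> (a, c) \<in> L \<Longrightarrow> c = b"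
  using is_layer_disjoint[of n L "(a, b)" "(a, c)"] by auto

lemma is_layer_snd_unique: "is_layer n L \<Longrightarrow> (a, b) \<in> L \<Longrightarrow> (c, b) \<in> L \<Longrightarrow> c = a"
  using is_layer_disjoint[of n L "(a, b)" "(c, b)"] by auto

lemma is_layer_snd_not_fst: "is_layer n L \<Longrightarrow> (a, b) \<in> L \<Longrightarrow> (b, c) \<notin> L"
  using is_layer_disjoint[of n L "(a, b)" "(b, c)"] by (auto simp: is_layer_def)

lemma apply_layer_fst:
  assumes "is_layer n L" and "(a, b) \<in> L"
  shows "apply_layer L x a = min (x a) (x b)"
proof -
  have "(THE c. (a, c) \<in> L) = b"
    using assms is_layer_fst_unique by blast
  then show ?thesis using assms(2) unfolding apply_layer_def by auto
qed

lemma apply_layer_snd: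
  assumes "is_layer n L" and "(a, b) \<in> L"
  shows "apply_layer L x b = max (x a) (x b)"
proof -
  have "(THE c. (c, b) \<in> L) = a"
    using assms is_layer_snd_unique by blast
  moreover have "\<nexists>c. (b, c) \<in> L"
    using assms is_layer_snd_not_fst by blast
  ultimately show ?thesis using assms(2) unfolding apply_layer_def by auto
qed

lemma is_layer_insert:
  assumes "is_layer n L" and "\<not> used L i" and "\<not> used L j" and "1 \<le> i" "i < j" "j \<le> n"
  shows "is_layer n (insert (i, j) L)"
proof -
  have "\<forall>c\<in>L. {fst c, snd c} \<inter> {i, j} = {}"
    using assms(2,3) unfolding used_def by blast
  then show ?thesis
    using assms(1,4-6) unfolding is_layer_def by (auto 0 3)
qed

lemma apply_layer_insert_ordered:
  assumes "\<not> used L i" and "\<not> used L j" and "i < j" and "x i \<le> x j"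
  shows "apply_layer (insert (i, j) L) x = apply_layer L x"
proof
  fix k
  have unused: "(i, c) \<notin> L" "(c, i) \<notin> L" "(j, c) \<notin> L" "(c, j) \<notin> L" for c
    using assms(1,2) unfolding used_def by force+
  consider "k = i" | "k = j" | "k \<noteq> i" "k \<noteq> j" by blast
  then show "apply_layer (insert (i, j) L) x k = apply_layer L x k"
  proof cases
    case 1
    have "(THE c. (i, c) \<in> insert (i, j) L) = j" using unused by auto
    then show ?thesis using 1 assms unused unfolding apply_layer_def by (auto simp: min_def)
  next
    case 2
    have "(THE c. (c, j) \<in> insert (i, j) L) = i" using unused by auto
    then show ?thesis using 2 assms unused unfolding apply_layer_def by (auto simp: max_def)
  next
    case 3
    then have "(k, c) \<in> insert (i, j) L \<longleftrightarrow> (k, c) \<in> L" "(c, k) \<in> insert (i, j) L \<longleftrightarrow> (c, k) \<in> L"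
      for c by auto
    then show ?thesis unfolding apply_layer_def by simp
  qed
qed

lemma run_append: "run (B @ C) x = run C (run B x)"
  unfolding run_def by simp

lemma run_Cons: "run (L # C) x = run C (apply_layer L x)"
  unfolding run_def by simp

lemma apply_adjacent_layer_one:
  assumes "is_layer n L" and "\<forall>(a, b)\<in>L. b = a + 1" and "z k"
  shows "apply_layer L z k \<or> ((k, k + 1) \<in> L \<and> apply_layer L z (k + 1))"
proof (cases "\<exists>c. (k, c) \<in> L")
  case True
  then obtain c where c: "(k, c) \<in> L" by blast
  then have "c = k + 1" using assms(2) by auto
  then show ?thesis using apply_layer_snd[OF assms(1) c] assms(3) c by auto
next
  case no_upper: False
  show ?thesis
  proof (cases "\<exists>c. (c, k) \<in> L")
    case True
    then obtain c where "(c, k) \<in> L" by blast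
    then show ?thesis using apply_layer_snd[OF assms(1)] assms(3) by fastforce
  next
    case False
    then show ?thesis using no_upper assms(3) unfolding apply_layer_def by auto
  qed
qed

lemma apply_adjacent_layer_zero:
  assumes "is_layer n L" and "\<forall>(a, b)\<in>L. b = a + 1" and "\<not> z k"
  shows "\<not> apply_layer L z k \<or> ((k - 1, k) \<in> L \<and> \<not> apply_layer L z (k - 1))"
proof (cases "\<exists>c. (k, c) \<in> L")
  case True
  then obtain c where "(k, c) \<in> L" by blast
  then show ?thesis using apply_layer_fst[OF assms(1)] assms(3) by fastforce
next
  case no_upper: False
  show ?thesis
  proof (cases "\<exists>c. (c, k) \<in> L")
    case True
    then obtain c where c: "(c, k) \<in> L" by blast
    then have "k = c + 1" using assms(2) by auto
    then show ?thesis using apply_layer_fst[OF assms(1) c] assms(3) c by auto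
  next
    case False
    then show ?thesis using no_upper assms(3) unfolding apply_layer_def by auto
  qed
qed

lemma sorted_on_mono:
  "sorted_on n w \<Longrightarrow> 1 \<le> p \<Longrightarrow> p \<le> q \<Longrightarrow> q \<le> n \<Longrightarrow> w p \<Longrightarrow> w q"
  unfolding sorted_on_def le_bool_def by blast

lemma apply_adjacent_layer_unsorted:
  assumes "is_layer n L" and "\<forall>(a, b)\<in>L. b = a + 1" and "(i, j) \<notin> L"
    and "1 \<le> i" "i < j" "j \<le> n" and "z i" and "\<not> z j"
  shows "\<not> sorted_on n (apply_layer L z)"
proof
  let ?w = "apply_layer L z"
  assume sorted: "sorted_on n ?w"
  obtain p where p: "?w p" "p = i \<or> p = i + 1 \<and> (i, i + 1) \<in> L"
    using apply_adjacent_layer_one[of n L z i, OF assms(1,2,7)] by blast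
  obtain q where q: "\<not> ?w q" "q = j \<or> q = j - 1 \<and> (j - 1, j) \<in> L"
    using apply_adjacent_layer_zero[of n L z j, OF assms(1,2,8)] by blast
  have "p \<le> q"
    using p(2) q(2) assms(3,5) by (cases "j = i + 1") auto
  moreover have "1 \<le> p" "q \<le> n" using p(2) q(2) assms(4,6) by auto
  ultimately show False using sorted_on_mono[OF sorted _ _ _ p(1)] q(1) by blast
qed

lemma sorting_network_insert_comparator:
  assumes "sorting_network n (B @ [L1, L2])" and "\<forall>(a, b)\<in>L2. b = a + 1" and "(i, j) \<notin> L2"
    and "1 \<le> i" "i < j" "j \<le> n" and "\<not> used L1 i" and "\<not> used L1 j"
  shows "sorting_network n (B @ [insert (i, j) L1, L2])"
proof -
  have layers: "is_layer n L" if "L \<in> set (B @ [L1, L2])" for L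
    using assms(1) that unfolding sorting_network_def is_network_def by blast
  have same_run: "run (B @ [insert (i, j) L1, L2]) x = run (B @ [L1, L2]) x" for x
  proof -
    define y where "y = run B x"
    have "y i \<le> y j"
    proof (rule ccontr)
      assume "\<not> y i \<le> y j"
      then have "apply_layer L1 y i" "\<not> apply_layer L1 y j"
        using apply_layer_unused[OF assms(7)] apply_layer_unused[OF assms(8)] by auto
      then have "\<not> sorted_on n (apply_layer L2 (apply_layer L1 y))"
        using apply_adjacent_layer_unsorted[OF layers assms(2-6)] by simp
      moreover have "sorted_on n (run (B @ [L1, L2]) x)"
        using assms(1) unfolding sorting_network_def by blast
      ultimately show False by (simp add: run_append run_Cons y_def run_def)
    qed
    then show ?thesis
      using apply_layer_insert_ordered[OF assms(7,8,5)]
      by (simp add: run_append run_Cons y_def)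
  qed
  have "is_layer n (insert (i, j) L1)"
    using is_layer_insert[OF layers assms(7,8,4-6)] by simp
  then have "is_network n (B @ [insert (i, j) L1, L2])"
    using layers unfolding is_network_def by auto
  then show ?thesis
    using assms(1) same_run unfolding sorting_network_def by simp
qed

lemma take_last_two:
  assumes "length C = d" and "d \<ge> 2"
  shows "C = take (d - 2) C @ [C ! (d - 2), C ! (d - 1)]"
proof -
  have "drop (d - 2) C = [C ! (d - 2), C ! (d - 1)]"
  proof -
    have "Suc (d - 2) = d - 1" "Suc (d - 1) = d" using assms(2) by auto
    then show ?thesis
      using assms Cons_nth_drop_Suc[of "d - 2" C] Cons_nth_drop_Suc[of "d - 1" C] by auto
  qed
  then show ?thesis by (metis append_take_drop_id)
qed

theorem lemma7:
  fixes n d :: nat and C :: network and i j :: nat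
  assumes "sorting_network n C"
    and "length C = d" and "d \<ge> 2"
    and "last_layer_nf n (C ! (d - 1))"
    and "1 \<le> i" and "i < j" and "j \<le> n"
    and "\<not> used (C ! (d - 2)) i" and "\<not> used (C ! (d - 2)) j"
    and "\<not> same_block C i j"
  shows "sorting_network n (C[d - 2 := insert (i, j) (C ! (d - 2))])"
proof -
  let ?B = "take (d - 2) C" and ?L1 = "C ! (d - 2)" and ?L2 = "C ! (d - 1)"
  have split: "C = ?B @ [?L1, ?L2]" using take_last_two[OF assms(2,3)] .
  have "last C = ?L2" by (subst split) simp
  then have "(i, j) \<notin> ?L2"
    using assms(10) unfolding same_block_def by blast
  moreover have "\<forall>(a, b)\<in>?L2. b = a + 1"
    using assms(4) unfolding last_layer_nf_def by blast
  moreover have "C[d - 2 := insert (i, j) ?L1] = ?B @ [insert (i, j) ?L1, ?L2]"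
    using assms(2,3) by (subst split) (simp add: list_update_append)
  ultimately show ?thesis
    using sorting_network_insert_comparator[of n ?B ?L1 ?L2] assms(1,5-9) split by simp
qed

end
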